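(* Assume the setting and standing assumption below. Then the sequence $\{\|g_{k,1}\|\}_{k\in\mathbb{N}}$ converges to zero $R$-linearly: there exist constants $c_1>0$ and $c_2\in(0,1)$, where $c_2$ depends only on $m$, $\rho$ and the eigenvalues of $A$, such that $$\|g_{k,1}\|\le c_1c_2^k\|g_{1,1}\|\quad\text{for all }k\in\mathbb{N}.$$
   Context: Setting: $A\in\mathbb{R}^{n\times n}$ symmetric positive definite with eigenvalues $0<\lambda_1\le\cdots\le\lambda_n$; $b\in\mathbb{R}^n$, $f(x)=\tfrac12x^TAx-b^Tx$, $g_{k,j}=\nabla f(x_{k,j})=Ax_{k,j}-b$. LMSD method with history length $m\in\mathbb{N}$ and tolerance $0$: given $x_{1,1}$ and positive $\alpha_{1,1},\dots,\alpha_{1,m}$, for cycles $k=1,2,\dots$ and $j=1,\dots,m$ set $x_{k,j+1}=x_{k,j}-\alpha_{k,j}g_{k,j}$; set $x_{k+1,1}=x_{k,m+1}$; let $G_k=[g_{k,1}\ \cdots\ g_{k,m}]$, take a thin QR factorization $G_k=Q_kR_k$ ($Q_k^TQ_k=I_m$, $R_k$ upper triangular), $T_k=Q_k^TAQ_k$ with eigenvalues $\theta_{k,1}\ge\cdots\ge\theta_{k,m}$, and set $\alpha_{k+1,j}=\theta_{k,j}^{-1}$. Standing assumption: $g_{k,j}\ne0$ for all $(k,j)$; for every $k$, $G_k$ has linearly independent columns (so $R_k$ is nonsingular); and there is $\rho\ge1$ with $\|R_k^{-1}\|\le\rho\|g_{k,1}\|^{-1}$ for all $k$ (spectral norm). 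*)

theory Defs
  imports "Jordan_Normal_Form.Jordan_Normal_Form"
begin

definition vnorm :: "real vec \<Rightarrow> real" where
  "vnorm v = sqrt (v \<bullet> v)"

definition spec_norm :: "real mat \<Rightarrow> real" where
  "spec_norm M = Sup {vnorm (M *\<^sub>v v) | v. v \<in> carrier_vec (dim_col M) \<and> vnorm v = 1}"

definition cols_mat :: "nat \<Rightarrow> nat \<Rightarrow> (nat \<Rightarrow> real vec) \<Rightarrow> real mat" where
  "cols_mat n m c = mat n m (\<lambda>(i, j). c (j + 1) $ i)"

definition eigs_with_mult :: "nat \<Rightarrow> real mat \<Rightarrow> (nat \<Rightarrow> real) \<Rightarrow> bool" where
  "eigs_with_mult d M lam \<longleftrightarrow> M \<in> carrier_mat d d \<and>
     char_poly M = (\<Prod>i\<in>{1..d}. [:- lam i, 1:])"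

end

theory Submission
  imports Defs "Jordan_Normal_Form.Schur_Decomposition"
begin

text \<open>
  Work in an orthonormal eigenbasis of \<open>A\<close>.  During cycle \<open>k\<close> the \<open>i\<close>-th coordinate of the gradient
  is multiplied by \<open>\<Prod>\<^sub>j (1 - \<alpha>\<^sub>k\<^sub>,\<^sub>j \<lambda>\<^sub>i)\<close>, where the step sizes are reciprocal Ritz values
  \<open>\<theta>\<^sub>k\<^sub>-\<^sub>1\<^sub>,\<^sub>j \<in> [\<lambda>\<^sub>1, \<lambda>\<^sub>n]\<close>.  A Ritz vector is a combination \<open>G\<^sub>k c\<close> of the gradients of the cycle
  with \<open>\<parallel>c\<parallel> \<le> \<rho> \<parallel>u\<parallel> / \<parallel>g\<^sub>k\<^sub>,\<^sub>1\<parallel>\<close>, so if \<open>g\<^sub>k\<^sub>,\<^sub>1\<close> has little mass on eigenvalues below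
  \<open>\<mu>\<close>, every Ritz value is at least \<open>3\<mu>/4\<close>.  Hence the component of eigenvalue \<open>\<lambda>\<^sub>i\<close> either
  contracts by \<open>max (1/3) (1 - \<lambda>\<^sub>1/\<lambda>\<^sub>n)\<^sup>m\<close> over the next cycle, or is dominated by the
  components of smaller eigenvalues.  Induction upwards through the spectrum shows that all
  components, and so \<open>\<parallel>g\<^sub>k\<^sub>,\<^sub>1\<parallel>\<close>, decay R-linearly.
\<close>

section \<open>Euclidean and spectral norms\<close>

lemma scalar_prod_self_nonneg: "0 \<le> (v :: real vec) \<bullet> v"
  using conjugate_square_ge_0_vec[of v] by simp

lemma scalar_prod_self_pos: "(v :: real vec) \<in> carrier_vec k \<Longrightarrow> v \<noteq> 0\<^sub>v k \<Longrightarrow> 0 < v \<bullet> v"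
  using conjugate_square_greater_0_vec[of v k] by simp

lemma vnorm_nonneg: "0 \<le> vnorm v"
  unfolding vnorm_def using scalar_prod_self_nonneg by simp

lemma vnorm_pos: "v \<in> carrier_vec k \<Longrightarrow> v \<noteq> 0\<^sub>v k \<Longrightarrow> 0 < vnorm v"
  unfolding vnorm_def using scalar_prod_self_pos by simp

lemma vnorm_square: "vnorm v ^ 2 = v \<bullet> v"
  unfolding vnorm_def using scalar_prod_self_nonneg by simp

lemma vnorm_smult: "vnorm (a \<cdot>\<^sub>v v) = \<bar>a\<bar> * vnorm v"
proof -
  have "(a \<cdot>\<^sub>v v) \<bullet> (a \<cdot>\<^sub>v v) = a^2 * (v \<bullet> v)"
    unfolding scalar_prod_def by (simp add: sum_distrib_left power2_eq_square algebra_simps)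
  thus ?thesis unfolding vnorm_def by (simp add: real_sqrt_mult)
qed

lemma scalar_prod_self_eq_sum: "(v :: real vec) \<in> carrier_vec k \<Longrightarrow> v \<bullet> v = (\<Sum>i<k. (v $ i)^2)"
  by (simp add: scalar_prod_def power2_eq_square lessThan_atLeast0)

lemma component_square_le_scalar_prod_self:
  "(v :: real vec) \<in> carrier_vec k \<Longrightarrow> i < k \<Longrightarrow> (v $ i)^2 \<le> v \<bullet> v"
  by (simp add: scalar_prod_self_eq_sum) (rule member_le_sum, auto)

lemma abs_component_le_vnorm: "(v :: real vec) \<in> carrier_vec k \<Longrightarrow> i < k \<Longrightarrow> \<bar>v $ i\<bar> \<le> vnorm v"
  unfolding vnorm_def by (metis component_square_le_scalar_prod_self real_sqrt_abs real_sqrt_le_mono)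

lemma spec_norm_bdd_above:
  fixes M :: "real mat"
  assumes M: "M \<in> carrier_mat r k"
  shows "bdd_above {vnorm (M *\<^sub>v v) | v. v \<in> carrier_vec (dim_col M) \<and> vnorm v = 1}"
proof (rule bdd_aboveI)
  fix y assume "y \<in> {vnorm (M *\<^sub>v v) | v. v \<in> carrier_vec (dim_col M) \<and> vnorm v = 1}"
  then obtain w where w: "w \<in> carrier_vec k" "vnorm w = 1" and y: "y = vnorm (M *\<^sub>v w)"
    using M by auto
  have entry: "\<bar>(M *\<^sub>v w) $ i\<bar> \<le> (\<Sum>j<k. \<bar>M $$ (i,j)\<bar>)" if i: "i < r" for i
  proof -
    have "\<bar>(M *\<^sub>v w) $ i\<bar> = \<bar>\<Sum>j<k. M $$ (i,j) * w $ j\<bar>"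
      using M w i by (simp add: mult_mat_vec_def scalar_prod_def lessThan_atLeast0)
    also have "\<dots> \<le> (\<Sum>j<k. \<bar>M $$ (i,j)\<bar> * \<bar>w $ j\<bar>)"
      using sum_abs[of "\<lambda>j. M $$ (i,j) * w $ j"] by (simp add: abs_mult)
    also have "\<dots> \<le> (\<Sum>j<k. \<bar>M $$ (i,j)\<bar>)"
      using abs_component_le_vnorm[OF w(1)] w(2) by (intro sum_mono) (simp add: mult_left_le)
    finally show ?thesis .
  qed
  have "(M *\<^sub>v w) \<bullet> (M *\<^sub>v w) \<le> (\<Sum>i<r. (\<Sum>j<k. \<bar>M $$ (i,j)\<bar>)^2)"
  proof -
    have "((M *\<^sub>v w) $ i)^2 \<le> (\<Sum>j<k. \<bar>M $$ (i,j)\<bar>)^2" if "i < r" for i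
      using power_mono[OF entry[OF that], of 2] by simp
    moreover have "M *\<^sub>v w \<in> carrier_vec r" using M w by simp
    ultimately show ?thesis by (simp add: scalar_prod_self_eq_sum) (rule sum_mono, simp)
  qed
  thus "y \<le> sqrt (\<Sum>i<r. (\<Sum>j<k. \<bar>M $$ (i,j)\<bar>)^2)"
    unfolding y vnorm_def by (rule real_sqrt_le_mono)
qed

lemma vnorm_mult_mat_vec_le:
  fixes M :: "real mat"
  assumes M: "M \<in> carrier_mat r k" and v: "v \<in> carrier_vec k"
  shows "vnorm (M *\<^sub>v v) \<le> spec_norm M * vnorm v"
proof (cases "v = 0\<^sub>v k")
  case True
  hence "M *\<^sub>v v = 0\<^sub>v r" using M by auto
  thus ?thesis using True by (simp add: vnorm_def)
next
  case False
  have pos: "0 < vnorm v" using vnorm_pos[OF v False] .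
  define u where "u = (1 / vnorm v) \<cdot>\<^sub>v v"
  have "vnorm (M *\<^sub>v u) \<le> spec_norm M"
    unfolding spec_norm_def using M v pos
    by (intro cSup_upper spec_norm_bdd_above[OF M]) (auto simp: u_def vnorm_smult)
  moreover have "vnorm (M *\<^sub>v u) = vnorm (M *\<^sub>v v) / vnorm v"
    unfolding u_def using M v pos by (simp add: mult_mat_vec vnorm_smult)
  ultimately show ?thesis using pos by (simp add: divide_le_eq)
qed

section \<open>Orthogonal diagonalization of real symmetric matrices\<close>

lemma orthogonal_mat_right_inverse:
  fixes W :: "'a :: field mat"
  assumes "W \<in> carrier_mat n n" "transpose_mat W * W = 1\<^sub>m n"
  shows "W * transpose_mat W = 1\<^sub>m n"
  using mat_mult_left_right_inverse[of "transpose_mat W" n W] assms by auto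

lemma congruence_entry:
  fixes W M :: "'a :: comm_semiring_0 mat"
  assumes W: "W \<in> carrier_mat n k" and M: "M \<in> carrier_mat n n" and i: "i < k" and j: "j < k"
  shows "(transpose_mat W * M * W) $$ (i,j) = col W i \<bullet> (M *\<^sub>v col W j)"
proof -
  have "(transpose_mat W * M * W) $$ (i,j) = (transpose_mat W * (M * W)) $$ (i,j)"
    using W M by (subst assoc_mult_mat) auto
  also have "\<dots> = col W i \<bullet> (M *\<^sub>v col W j)"
    using W M i j by (simp add: col_mult2 mult_mat_vec_def)
  finally show ?thesis .
qed

lemma symmetric_congruence:
  fixes W A :: "'a :: comm_semiring_0 mat"
  assumes W: "W \<in> carrier_mat n k" and A: "A \<in> carrier_mat n n" and sym: "transpose_mat A = A"
  shows "transpose_mat (transpose_mat W * A * W) = transpose_mat W * A * W"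
proof -
  have "transpose_mat (transpose_mat W * A * W) = transpose_mat W * transpose_mat (transpose_mat W * A)"
    by (rule transpose_mult[of _ k n]) (use W A in auto)
  also have "transpose_mat (transpose_mat W * A) = transpose_mat A * W"
    by (subst transpose_mult[of _ k n]) (use W A in auto)
  finally show ?thesis using W A sym by (simp add: assoc_mult_mat[of _ k n _ n _ k])
qed

lemma orthogonal_congruence_char_poly:
  fixes W A :: "'a :: field mat"
  assumes W: "W \<in> carrier_mat n n" and WtW: "transpose_mat W * W = 1\<^sub>m n" and A: "A \<in> carrier_mat n n"
  shows "char_poly (transpose_mat W * A * W) = char_poly A"
proof -
  have "W * (transpose_mat W * A * W) * transpose_mat W
    = (W * transpose_mat W) * A * (W * transpose_mat W)"
    using W A by (simp add: assoc_mult_mat[of _ n n _ n _ n])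
  hence "A = W * (transpose_mat W * A * W) * transpose_mat W"
    using A orthogonal_mat_right_inverse[OF W WtW] by simp
  hence "similar_mat_wit A (transpose_mat W * A * W) W (transpose_mat W)"
    using W A WtW orthogonal_mat_right_inverse[OF W WtW] by (auto simp: similar_mat_wit_def Let_def)
  thus ?thesis using char_poly_similar unfolding similar_mat_def by metis
qed

lemma orthonormal_basis_extension:
  fixes v :: "real vec"
  assumes v: "v \<in> carrier_vec n" and v0: "v \<noteq> 0\<^sub>v n"
  shows "\<exists>W \<in> carrier_mat n n. transpose_mat W * W = 1\<^sub>m n \<and> (\<exists>c. col W 0 = c \<cdot>\<^sub>v v)"
proof -
  interpret cof_vec_space n "TYPE(real)" .
  define b where "b = basis_completion v"
  define ws where "ws = gram_schmidt n b"
  define W where "W = mat_of_cols n (map (\<lambda>w. (1 / vnorm w) \<cdot>\<^sub>v w) ws)"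
  from basis_completion[OF v v0, folded b_def]
  have b: "set b \<subseteq> carrier_vec n" "distinct b" "\<not> lin_dep (set b)" "hd b = v" "length b = n"
    by (auto simp: basis_def)
  hence n: "0 < n" using v v0 by (cases b) auto
  from gram_schmidt_result[OF b(1-3) refl, folded ws_def]
  have ws: "set ws \<subseteq> carrier_vec n" "corthogonal ws" "length ws = n" by (auto simp: b(5))
  have hd: "hd ws = v"
    using b(4,5) n v unfolding ws_def by (cases b) auto
  have wpos: "0 < vnorm (ws ! i)" if "i < n" for i
  proof -
    have "ws ! i \<bullet> ws ! i \<noteq> 0" using ws that unfolding corthogonal_def by simp
    thus ?thesis unfolding vnorm_def using scalar_prod_self_nonneg[of "ws ! i"] by simp
  qed
  have W: "W \<in> carrier_mat n n" unfolding W_def using ws by auto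
  have colW: "col W i = (1 / vnorm (ws ! i)) \<cdot>\<^sub>v ws ! i" if "i < n" for i
    unfolding W_def using ws that by (subst col_mat_of_cols) auto
  have "transpose_mat W * W = 1\<^sub>m n"
  proof (rule eq_matI)
    fix i j assume "i < dim_row (1\<^sub>m n)" "j < dim_col (1\<^sub>m n)"
    hence i: "i < n" and j: "j < n" by auto
    have orth: "ws ! i \<bullet> ws ! j = 0 \<longleftrightarrow> i \<noteq> j"
      using ws i j unfolding corthogonal_def by simp
    have "(transpose_mat W * W) $$ (i,j) = (ws ! i \<bullet> ws ! j) / (vnorm (ws ! i) * vnorm (ws ! j))"
    proof -
      have "ws ! i \<in> carrier_vec n" "ws ! j \<in> carrier_vec n" using ws i j by auto
      thus ?thesis using W i j by (simp add: colW)
    qed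
    also have "\<dots> = 1\<^sub>m n $$ (i,j)"
      using orth i j wpos[OF i] vnorm_square[of "ws ! i"] by (auto simp: power2_eq_square)
    finally show "(transpose_mat W * W) $$ (i,j) = 1\<^sub>m n $$ (i,j)" .
  qed (use W in auto)
  moreover have "col W 0 = (1 / vnorm v) \<cdot>\<^sub>v v"
    using colW[OF n] hd ws(3) n by (cases ws) auto
  ultimately show ?thesis using W by blast
qed

lemma orthogonal_deflation:
  fixes A W :: "real mat"
  assumes A: "A \<in> carrier_mat n n" and sym: "transpose_mat A = A"
    and W: "W \<in> carrier_mat n n" and WtW: "transpose_mat W * W = 1\<^sub>m n"
    and n: "0 < n" and eig: "A *\<^sub>v col W 0 = e \<cdot>\<^sub>v col W 0"
  shows "\<exists>B \<in> carrier_mat (n-1) (n-1). transpose_mat B = B \<and>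
    transpose_mat W * A * W = four_block_mat (mat 1 1 (\<lambda>_. e)) (0\<^sub>m 1 (n-1)) (0\<^sub>m (n-1) 1) B"
proof -
  define D where "D = transpose_mat W * A * W"
  define B where "B = mat (n-1) (n-1) (\<lambda>(i,j). D $$ (Suc i, Suc j))"
  have D: "D \<in> carrier_mat n n" unfolding D_def using W A by auto
  have symD: "transpose_mat D = D" unfolding D_def by (rule symmetric_congruence[OF W A sym])
  have col0: "D $$ (i,0) = (if i = 0 then e else 0)" if i: "i < n" for i
  proof -
    have "D $$ (i,0) = e * (col W i \<bullet> col W 0)"
      unfolding D_def congruence_entry[OF W A i n] eig using W i n by simp
    also have "col W i \<bullet> col W 0 = 1\<^sub>m n $$ (i,0)"
      using WtW[symmetric] W i n by (simp add: congruence_entry[of W n n "1\<^sub>m n", simplified])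
    finally show ?thesis using i n by simp
  qed
  have D_swap: "D $$ (j,i) = D $$ (i,j)" if "i < n" "j < n" for i j
    using symD D that by (metis carrier_matD index_transpose_mat(1))
  have row0: "D $$ (0,j) = (if j = 0 then e else 0)" if j: "j < n" for j
    using col0[OF j] D_swap[OF j n] by simp
  have "D = four_block_mat (mat 1 1 (\<lambda>_. e)) (0\<^sub>m 1 (n-1)) (0\<^sub>m (n-1) 1) B"
    by (rule eq_matI) (use D n col0 row0 in \<open>auto simp: B_def less_Suc_eq_0_disj\<close>)
  moreover have "transpose_mat B = B"
    unfolding B_def by (rule eq_matI) (use D_swap in auto)
  ultimately show ?thesis unfolding D_def B_def by auto
qed

lemma mult_four_block_diag:
  fixes a c B C :: "'a :: semiring_1 mat"
  assumes "a \<in> carrier_mat 1 1" "c \<in> carrier_mat 1 1" "B \<in> carrier_mat k k" "C \<in> carrier_mat k k"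
  shows "four_block_mat a (0\<^sub>m 1 k) (0\<^sub>m k 1) B * four_block_mat c (0\<^sub>m 1 k) (0\<^sub>m k 1) C
    = four_block_mat (a * c) (0\<^sub>m 1 k) (0\<^sub>m k 1) (B * C)"
  using assms by (subst mult_four_block_mat[of _ 1 1 _ k _ k _ _ 1 _ k]) auto

lemma diagonal_four_block_mat:
  fixes E D :: "'a :: zero mat"
  assumes "E \<in> carrier_mat 1 1" "D \<in> carrier_mat k k" "diagonal_mat D"
  shows "diagonal_mat (four_block_mat E (0\<^sub>m 1 k) (0\<^sub>m k 1) D)"
  using assms unfolding diagonal_mat_def
  by (auto simp: less_Suc_eq_0_disj) (metis Suc_less_eq diff_Suc_1)

lemma congruence_mult:
  fixes W F A :: "'a :: comm_semiring_0 mat"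
  assumes "W \<in> carrier_mat n n" "F \<in> carrier_mat n n" "A \<in> carrier_mat n n"
  shows "transpose_mat (W * F) * A * (W * F) = transpose_mat F * (transpose_mat W * A * W) * F"
  using assms by (simp add: transpose_mult[of _ n n] assoc_mult_mat[of _ n n _ n _ n])

lemma orthogonal_block_extension:
  fixes U B E :: "'a :: comm_ring_1 mat"
  assumes U: "U \<in> carrier_mat k k" and UtU: "transpose_mat U * U = 1\<^sub>m k"
    and E: "E \<in> carrier_mat 1 1" and B: "B \<in> carrier_mat k k"
  shows "\<exists>F \<in> carrier_mat (Suc k) (Suc k). transpose_mat F * F = 1\<^sub>m (Suc k) \<and>
    transpose_mat F * four_block_mat E (0\<^sub>m 1 k) (0\<^sub>m k 1) B * F
      = four_block_mat E (0\<^sub>m 1 k) (0\<^sub>m k 1) (transpose_mat U * B * U)"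
proof -
  define F where "F = four_block_mat (1\<^sub>m 1) (0\<^sub>m 1 k) (0\<^sub>m k 1) U"
  have Ft: "transpose_mat F = four_block_mat (1\<^sub>m 1) (0\<^sub>m 1 k) (0\<^sub>m k 1) (transpose_mat U)"
    unfolding F_def using U by (subst transpose_four_block_mat) auto
  have "transpose_mat F * F = four_block_mat (1\<^sub>m 1) (0\<^sub>m 1 k) (0\<^sub>m k 1) (1\<^sub>m k)"
    unfolding Ft unfolding F_def using U UtU by (subst mult_four_block_diag) auto
  hence "transpose_mat F * F = 1\<^sub>m (Suc k)" by (simp only: four_block_one_mat) simp
  moreover have "transpose_mat F * four_block_mat E (0\<^sub>m 1 k) (0\<^sub>m k 1) B * F
    = four_block_mat (1\<^sub>m 1 * E * 1\<^sub>m 1) (0\<^sub>m 1 k) (0\<^sub>m k 1) (transpose_mat U * B * U)"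
  proof -
    have "transpose_mat F * four_block_mat E (0\<^sub>m 1 k) (0\<^sub>m k 1) B
      = four_block_mat (1\<^sub>m 1 * E) (0\<^sub>m 1 k) (0\<^sub>m k 1) (transpose_mat U * B)"
      unfolding Ft by (rule mult_four_block_diag) (use U B E in auto)
    also have "\<dots> * F
      = four_block_mat (1\<^sub>m 1 * E * 1\<^sub>m 1) (0\<^sub>m 1 k) (0\<^sub>m k 1) (transpose_mat U * B * U)"
      unfolding F_def by (rule mult_four_block_diag) (use U B E in auto)
    finally show ?thesis .
  qed
  moreover have "F \<in> carrier_mat (Suc k) (Suc k)" unfolding F_def using U by auto
  moreover have "1\<^sub>m 1 * E * 1\<^sub>m 1 = E" using E by simp
  ultimately show ?thesis by (intro bexI[of _ F]) simp_all
qed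

lemma real_symmetric_orthogonal_diagonalization:
  fixes A :: "real mat"
  assumes "A \<in> carrier_mat n n" "transpose_mat A = A" "char_poly A = (\<Prod>e\<leftarrow>es. [:-e,1:])"
  shows "\<exists>V \<in> carrier_mat n n. transpose_mat V * V = 1\<^sub>m n \<and> diagonal_mat (transpose_mat V * A * V)"
  using assms
proof (induct es arbitrary: n A)
  case Nil
  with degree_monic_char_poly[of A n] have "n = 0" by auto
  thus ?case by (intro bexI[of _ "1\<^sub>m 0"]) (auto simp: diagonal_mat_def)
next
  case (Cons e es n A)
  note A = Cons(2) and sym = Cons(3) and cp = Cons(4)
  have "degree (char_poly A) = Suc (degree (\<Prod>e\<leftarrow>es. [:-e,1:]))"
  proof -
    have "monic (\<Prod>e\<leftarrow>es. [:-e,1:])" by (rule monic_prod_list) auto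
    thus ?thesis unfolding cp list.map prod_list.Cons by (subst degree_mult_eq) auto
  qed
  with degree_monic_char_poly[OF A] have n: "0 < n" by auto
  have "eigenvalue A e" unfolding eigenvalue_root_char_poly[OF A] cp by simp
  then obtain v where "eigenvector A v e" using find_eigenvector[OF A] by blast
  hence v: "v \<in> carrier_vec n" "v \<noteq> 0\<^sub>v n" "A *\<^sub>v v = e \<cdot>\<^sub>v v" using A by (auto simp: eigenvector_def)
  obtain W c where W: "W \<in> carrier_mat n n" and WtW: "transpose_mat W * W = 1\<^sub>m n"
    and colW: "col W 0 = c \<cdot>\<^sub>v v" using orthonormal_basis_extension[OF v(1,2)] by blast
  have "A *\<^sub>v col W 0 = e \<cdot>\<^sub>v col W 0"
    unfolding colW using A v by (auto simp: mult_mat_vec smult_smult_assoc mult.commute)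
  then obtain B where B: "B \<in> carrier_mat (n-1) (n-1)" and symB: "transpose_mat B = B"
    and WAW: "transpose_mat W * A * W = four_block_mat (mat 1 1 (\<lambda>_. e)) (0\<^sub>m 1 (n-1)) (0\<^sub>m (n-1) 1) B"
    using orthogonal_deflation[OF A sym W WtW n] by blast
  have "char_poly A = [:-e,1:] * char_poly B"
    using orthogonal_congruence_char_poly[OF W WtW A] char_poly_four_block_zeros_col[OF _ _ B]
    by (simp add: WAW char_poly_defs det_def sign_def)
  hence "[:-e,1:] * char_poly B = [:-e,1:] * (\<Prod>e\<leftarrow>es. [:-e,1:])" using cp by simp
  hence "char_poly B = (\<Prod>e\<leftarrow>es. [:-e,1:])" by (subst (asm) mult_left_cancel) auto
  then obtain U where U: "U \<in> carrier_mat (n-1) (n-1)" and UtU: "transpose_mat U * U = 1\<^sub>m (n-1)"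
    and diag: "diagonal_mat (transpose_mat U * B * U)"
    using Cons(1)[OF B symB] by blast
  have n1: "Suc (n-1) = n" using n by simp
  obtain F where F: "F \<in> carrier_mat n n" and FtF: "transpose_mat F * F = 1\<^sub>m n"
    and FBF: "transpose_mat F * (transpose_mat W * A * W) * F
      = four_block_mat (mat 1 1 (\<lambda>_. e)) (0\<^sub>m 1 (n-1)) (0\<^sub>m (n-1) 1) (transpose_mat U * B * U)"
    using orthogonal_block_extension[OF U UtU mat_carrier B, unfolded n1] unfolding WAW by blast
  have "transpose_mat (W * F) * (W * F) = transpose_mat F * (transpose_mat W * W) * F"
    using W F by (simp add: transpose_mult[of _ n n] assoc_mult_mat[of _ n n _ n _ n])
  also have "\<dots> = 1\<^sub>m n" unfolding WtW using F FtF by simp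
  finally have "transpose_mat (W * F) * (W * F) = 1\<^sub>m n" .
  moreover have "diagonal_mat (transpose_mat (W * F) * A * (W * F))"
    unfolding congruence_mult[OF W F A] FBF using diag U B by (intro diagonal_four_block_mat) auto
  moreover have "W * F \<in> carrier_mat n n" using W F by simp
  ultimately show ?case by blast
qed

section \<open>Coordinates in an orthonormal eigenbasis\<close>

locale symmetric_eigenbasis =
  fixes n :: nat and A V :: "real mat" and lam :: "nat \<Rightarrow> real"
  assumes A: "A \<in> carrier_mat n n"
    and V: "V \<in> carrier_mat n n" and VtV: "transpose_mat V * V = 1\<^sub>m n"
    and diagonal: "diagonal_mat (transpose_mat V * A * V)"
    and eigs: "eigs_with_mult n A lam"
    and lam_sorted: "\<forall>i j. 1 \<le> i \<longrightarrow> i \<le> j \<longrightarrow> j \<le> n \<longrightarrow> lam i \<le> lam j"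
begin

definition eigval :: "nat \<Rightarrow> real" where
  "eigval i = (transpose_mat V * A * V) $$ (i,i)"

definition coord :: "real vec \<Rightarrow> real vec" where
  "coord u = transpose_mat V *\<^sub>v u"

lemma VVt: "V * transpose_mat V = 1\<^sub>m n"
  using orthogonal_mat_right_inverse[OF V VtV] .

lemma coord_carrier: "coord u \<in> carrier_vec n"
  unfolding coord_def using V by (simp add: carrier_vecI)

lemma coord_inverse: "u \<in> carrier_vec n \<Longrightarrow> V *\<^sub>v coord u = u"
  unfolding coord_def using V VVt by (simp add: assoc_mult_mat_vec[symmetric, of _ n n _ n])

lemma coord_diff_smult:
  "u \<in> carrier_vec n \<Longrightarrow> w \<in> carrier_vec n \<Longrightarrow> i < n \<Longrightarrow>
   coord (u - c \<cdot>\<^sub>v w) $ i = coord u $ i - c * coord w $ i"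
  unfolding coord_def using V by (simp add: mult_minus_distrib_mat_vec mult_mat_vec)

lemma diagonal_mult_vec:
  assumes w: "w \<in> carrier_vec n" and i: "i < n"
  shows "((transpose_mat V * A * V) *\<^sub>v w) $ i = eigval i * w $ i"
proof -
  let ?D = "transpose_mat V * A * V"
  have D: "?D \<in> carrier_mat n n" using A V by auto
  have "(?D *\<^sub>v w) $ i = (\<Sum>j<n. ?D $$ (i,j) * w $ j)"
    using D V w i by (simp add: scalar_prod_def lessThan_atLeast0)
  also have "\<dots> = (\<Sum>j<n. if j = i then eigval i * w $ i else 0)"
    using diagonal D i by (intro sum.cong) (auto simp: eigval_def diagonal_mat_def)
  finally show ?thesis using i by simp
qed

lemma coord_mult_A:
  assumes u: "u \<in> carrier_vec n" and i: "i < n"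
  shows "coord (A *\<^sub>v u) $ i = eigval i * coord u $ i"
proof -
  have "coord (A *\<^sub>v u) = transpose_mat V *\<^sub>v (A *\<^sub>v (V *\<^sub>v coord u))"
    by (simp only: coord_inverse[OF u]) (simp only: coord_def)
  also have "\<dots> = (transpose_mat V * A * V) *\<^sub>v coord u"
    using V A coord_carrier[of u] by (simp add: assoc_mult_mat_vec[of _ n n _ n])
  finally show ?thesis using diagonal_mult_vec[OF coord_carrier i] by simp
qed

lemma scalar_prod_coord:
  "u \<in> carrier_vec n \<Longrightarrow> w \<in> carrier_vec n \<Longrightarrow> coord u \<bullet> coord w = u \<bullet> w"
  using transpose_vec_mult_scalar[OF V coord_carrier, of u w] coord_inverse by (simp add: coord_def)

lemma scalar_prod_self_coord: "u \<in> carrier_vec n \<Longrightarrow> u \<bullet> u = (\<Sum>i<n. (coord u $ i)^2)"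
  using scalar_prod_coord[of u u] scalar_prod_self_eq_sum[OF coord_carrier] by simp

lemma quadratic_form_coord:
  assumes u: "u \<in> carrier_vec n"
  shows "u \<bullet> (A *\<^sub>v u) = (\<Sum>i<n. eigval i * (coord u $ i)^2)"
proof -
  have "u \<bullet> (A *\<^sub>v u) = coord u \<bullet> coord (A *\<^sub>v u)" using scalar_prod_coord u A by simp
  also have "\<dots> = (\<Sum>i<n. coord u $ i * (eigval i * coord u $ i))"
    using coord_carrier[of u] coord_carrier[of "A *\<^sub>v u"] coord_mult_A[OF u]
    by (simp add: scalar_prod_def lessThan_atLeast0)
  finally show ?thesis by (simp add: power2_eq_square mult_ac)
qed

lemma eigval_in_spectrum:
  assumes i: "i < n"
  shows "\<exists>j\<in>{1..n}. eigval i = lam j"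
proof -
  let ?D = "transpose_mat V * A * V"
  have D: "?D \<in> carrier_mat n n" using A V by auto
  have "?D *\<^sub>v unit_vec n i = eigval i \<cdot>\<^sub>v unit_vec n i"
    by (rule eq_vecI) (use D i diagonal_mult_vec[of "unit_vec n i"] in auto)
  hence "eigenvalue ?D (eigval i)"
    unfolding eigenvalue_def eigenvector_def using D i by (intro exI[of _ "unit_vec n i"]) auto
  hence "poly (char_poly A) (eigval i) = 0"
    using eigenvalue_root_char_poly[OF D] orthogonal_congruence_char_poly[OF V VtV A] by simp
  thus ?thesis using eigs unfolding eigs_with_mult_def by (auto simp: poly_prod)
qed

lemma eigval_bounds: "i < n \<Longrightarrow> lam 1 \<le> eigval i \<and> eigval i \<le> lam n"
  using eigval_in_spectrum lam_sorted by force

lemma rayleigh_bounds: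
  assumes u: "u \<in> carrier_vec n"
  shows "lam 1 * (u \<bullet> u) \<le> u \<bullet> (A *\<^sub>v u)" "u \<bullet> (A *\<^sub>v u) \<le> lam n * (u \<bullet> u)"
  unfolding scalar_prod_self_coord[OF u] quadratic_form_coord[OF u] sum_distrib_left
  using eigval_bounds by (auto intro!: sum_mono mult_right_mono)

definition spectral_mass_below :: "real vec \<Rightarrow> real \<Rightarrow> real" where
  "spectral_mass_below u \<mu> = (\<Sum>i \<in> {i. i < n \<and> eigval i < \<mu>}. (coord u $ i)^2)"

lemma spectral_mass_below_nonneg: "0 \<le> spectral_mass_below u \<mu>"
  unfolding spectral_mass_below_def by (simp add: sum_nonneg)

lemma quadratic_form_ge_spectral_mass:
  assumes u: "u \<in> carrier_vec n"
  shows "\<mu> * (u \<bullet> u) - (\<mu> - lam 1) * spectral_mass_below u \<mu> \<le> u \<bullet> (A *\<^sub>v u)"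
proof -
  have mass: "spectral_mass_below u \<mu> = (\<Sum>i<n. if eigval i < \<mu> then (coord u $ i)^2 else 0)"
    unfolding spectral_mass_below_def by (subst sum.inter_filter[symmetric]) (auto intro: sum.cong)
  have "\<mu> * (coord u $ i)^2 - (\<mu> - lam 1) * (if eigval i < \<mu> then (coord u $ i)^2 else 0)
      \<le> eigval i * (coord u $ i)^2" if "i < n" for i
    using eigval_bounds[OF that] by (auto simp: algebra_simps intro: mult_right_mono)
  hence "(\<Sum>i<n. \<mu> * (coord u $ i)^2 - (\<mu> - lam 1) * (if eigval i < \<mu> then (coord u $ i)^2 else 0))
      \<le> u \<bullet> (A *\<^sub>v u)"
    unfolding quadratic_form_coord[OF u] by (intro sum_mono) auto
  thus ?thesis
    unfolding mass scalar_prod_self_coord[OF u] by (simp add: sum_subtractf sum_distrib_left)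
qed

lemma spectral_mass_below_le:
  assumes "\<And>i. i < n \<Longrightarrow> eigval i < \<mu> \<Longrightarrow> \<bar>coord u $ i\<bar> \<le> B"
  shows "spectral_mass_below u \<mu> \<le> real n * B^2"
proof -
  have "spectral_mass_below u \<mu> \<le> (\<Sum>i \<in> {i. i < n \<and> eigval i < \<mu>}. B^2)"
    unfolding spectral_mass_below_def
    using power_mono[OF assms abs_ge_zero, of _ 2] by (intro sum_mono) simp
  also have "\<dots> \<le> real n * B^2"
  proof -
    have "card {i. i < n \<and> eigval i < \<mu>} \<le> n"
      using card_mono[of "{..<n}" "{i. i < n \<and> eigval i < \<mu>}"] by auto
    thus ?thesis by (simp add: mult_right_mono)
  qed
  finally show ?thesis .
qed

end

section \<open>Geometric bounds for real sequences\<close>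

lemma geometric_bound_of_recurrence:
  fixes a :: "nat \<Rightarrow> real"
  assumes s: "0 < s" and rec: "\<And>k. 1 \<le> k \<Longrightarrow> a (k+2) \<le> max (s * a (k+1)) (M * s^k)"
  shows "\<exists>C. \<forall>k\<ge>1. a k \<le> C * s^k"
proof -
  define C where "C = max (a 1 / s) (max (a 2 / s^2) (M / s^2))"
  have "a 1 / s \<le> C" "a 2 / s^2 \<le> C" "M / s^2 \<le> C" unfolding C_def by auto
  hence base: "a 1 \<le> C * s" "a 2 \<le> C * s^2" "M \<le> C * s^2"
    using s by (auto simp: pos_divide_le_eq)
  have step: "a (k+2) \<le> C * s^(k+2)" for k
  proof (induct k)
    case 0 thus ?case using base(2) by (simp add: numeral_2_eq_2 power2_eq_square)
  next
    case (Suc k)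
    have "s * a (Suc k + 1) \<le> C * s^(Suc k + 2)"
      using mult_left_mono[OF Suc[simplified] less_imp_le[OF s]] by (simp add: mult_ac)
    moreover have "M * s^(Suc k) \<le> C * s^(Suc k + 2)"
        using mult_right_mono[OF base(3), of "s^Suc k"] s by (simp add: power_add power2_eq_square mult_ac)
    ultimately show ?case using rec[of "Suc k"] by simp
  qed
  hence "a k \<le> C * s^k" if "1 \<le> k" for k
  proof (cases "k = 1")
    case False
    with that have "k = (k - 2) + 2" by simp
    thus ?thesis using step[of "k - 2"] by simp
  qed (use base(1) in simp)
  thus ?thesis by blast
qed

lemma finite_uniform_geometric_bound:
  fixes f :: "'i \<Rightarrow> nat \<Rightarrow> real"
  assumes "finite I" and "0 \<le> s" and "\<And>i. i \<in> I \<Longrightarrow> \<exists>C. \<forall>k\<ge>1. f i k \<le> C * s^k"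
  shows "\<exists>C. \<forall>i\<in>I. \<forall>k\<ge>1. f i k \<le> C * s^k"
  using assms
proof (induct I rule: finite_induct)
  case (insert x F)
  obtain C1 where C1: "\<forall>k\<ge>1. f x k \<le> C1 * s^k" using insert(5)[of x] by blast
  obtain C2 where C2: "\<forall>i\<in>F. \<forall>k\<ge>1. f i k \<le> C2 * s^k"
    using insert(3)[OF insert(4)] insert(5) by blast
  have "C1 * s^k \<le> max C1 C2 * s^k" "C2 * s^k \<le> max C1 C2 * s^k" for k
    using insert(4) by (auto intro: mult_right_mono)
  hence "f i k \<le> max C1 C2 * s^k" if "i \<in> insert x F" "1 \<le> k" for i k
    using C1 C2 that by (metis insert_iff order.trans)
  thus ?case by blast
qed simp

section \<open>Ritz values and the LMSD iteration\<close>

lemma ritz_value_rayleigh_quotient: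
  fixes A Q :: "real mat"
  assumes A: "A \<in> carrier_mat n n" and Q: "Q \<in> carrier_mat n m" and QtQ: "transpose_mat Q * Q = 1\<^sub>m m"
    and ev: "eigenvalue (transpose_mat Q * A * Q) \<theta>"
  shows "\<exists>w \<in> carrier_vec m. w \<noteq> 0\<^sub>v m \<and> (Q *\<^sub>v w) \<bullet> (Q *\<^sub>v w) = w \<bullet> w \<and>
    \<theta> * (w \<bullet> w) = (Q *\<^sub>v w) \<bullet> (A *\<^sub>v (Q *\<^sub>v w))"
proof -
  have T: "transpose_mat Q * A * Q \<in> carrier_mat m m" using Q A by auto
  obtain w where w: "w \<in> carrier_vec m" "w \<noteq> 0\<^sub>v m" and Tw: "(transpose_mat Q * A * Q) *\<^sub>v w = \<theta> \<cdot>\<^sub>v w"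
    using ev T unfolding eigenvalue_def eigenvector_def by auto
  have QtQw: "transpose_mat Q *\<^sub>v (Q *\<^sub>v w) = w"
    using Q w QtQ by (simp add: assoc_mult_mat_vec[symmetric, of _ m n _ m])
  have "(Q *\<^sub>v w) \<bullet> (Q *\<^sub>v w) = w \<bullet> w"
    using transpose_vec_mult_scalar[OF Q w(1), of "Q *\<^sub>v w"] Q w QtQw by simp
  moreover have "\<theta> * (w \<bullet> w) = (Q *\<^sub>v w) \<bullet> (A *\<^sub>v (Q *\<^sub>v w))"
  proof -
    have "(transpose_mat Q * A * Q) *\<^sub>v w = (transpose_mat Q * A) *\<^sub>v (Q *\<^sub>v w)"
      by (rule assoc_mult_mat_vec) (use Q A w in auto)
    also have "\<dots> = transpose_mat Q *\<^sub>v (A *\<^sub>v (Q *\<^sub>v w))"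
      by (rule assoc_mult_mat_vec) (use Q A w in auto)
    finally have "(transpose_mat Q * A * Q) *\<^sub>v w = transpose_mat Q *\<^sub>v (A *\<^sub>v (Q *\<^sub>v w))" .
    hence "\<theta> * (w \<bullet> w) = (transpose_mat Q *\<^sub>v (A *\<^sub>v (Q *\<^sub>v w))) \<bullet> w"
      using Tw w by (metis smult_scalar_prod_distrib)
    also have "\<dots> = (A *\<^sub>v (Q *\<^sub>v w)) \<bullet> (Q *\<^sub>v w)"
      using Q A w by (intro transpose_vec_mult_scalar) auto
    finally show ?thesis using Q A w by (simp add: comm_scalar_prod[of _ n])
  qed
  ultimately show ?thesis using w by blast
qed

text \<open>The value for \<open>n = 0\<close> is irrelevant: there is no nonzero gradient then.\<close>

definition lmsd_rate :: "nat \<Rightarrow> nat \<Rightarrow> (nat \<Rightarrow> real) \<Rightarrow> real" where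
  "lmsd_rate m n lam = (if n = 0 then 1/2 else max (1/3) (1 - lam 1 / lam n) ^ m)"

lemma lmsd_rate_bounds:
  assumes "1 \<le> m" "\<forall>i\<in>{1..n}. 0 < lam i" "\<forall>i j. 1 \<le> i \<longrightarrow> i \<le> j \<longrightarrow> j \<le> n \<longrightarrow> lam i \<le> lam j"
  shows "0 < lmsd_rate m n lam" "lmsd_rate m n lam < 1"
proof -
  have "n \<noteq> 0 \<Longrightarrow> 0 < lam 1 / lam n" using assms(2,3) by (auto intro!: divide_pos_pos)
  thus "0 < lmsd_rate m n lam" "lmsd_rate m n lam < 1"
    using assms(1) by (auto simp: lmsd_rate_def power_less_one_iff)
qed

locale lmsd = symmetric_eigenbasis n A V lam
  for n :: nat and A V :: "real mat" and lam :: "nat \<Rightarrow> real" +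
  fixes m :: nat and \<rho> :: real and \<alpha> :: "nat \<Rightarrow> nat \<Rightarrow> real" and Q R :: "nat \<Rightarrow> real mat"
    and \<theta> :: "nat \<Rightarrow> nat \<Rightarrow> real" and g :: "nat \<Rightarrow> nat \<Rightarrow> real vec"
  assumes m_pos: "1 \<le> m"
    and lam_pos: "\<And>i. i \<in> {1..n} \<Longrightarrow> 0 < lam i"
    and alpha_first_pos: "\<And>j. j \<in> {1..m} \<Longrightarrow> 0 < \<alpha> 1 j"
    and g_carrier: "\<And>k j. 1 \<le> k \<Longrightarrow> j \<in> {1..m+1} \<Longrightarrow> g k j \<in> carrier_vec n"
    and g_step: "\<And>k j. 1 \<le> k \<Longrightarrow> j \<in> {1..m} \<Longrightarrow> g k (j+1) = g k j - \<alpha> k j \<cdot>\<^sub>v (A *\<^sub>v g k j)"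
    and g_cycle: "\<And>k. 1 \<le> k \<Longrightarrow> g (k+1) 1 = g k (m+1)"
    and g_nonzero: "\<And>k. 1 \<le> k \<Longrightarrow> g k 1 \<noteq> 0\<^sub>v n"
    and QR: "\<And>k. 1 \<le> k \<Longrightarrow> Q k \<in> carrier_mat n m \<and> R k \<in> carrier_mat m m \<and>
      cols_mat n m (g k) = Q k * R k \<and> transpose_mat (Q k) * Q k = 1\<^sub>m m"
    and R_inverse: "\<And>k. 1 \<le> k \<Longrightarrow> \<exists>Ri \<in> carrier_mat m m. R k * Ri = 1\<^sub>m m \<and>
      spec_norm Ri \<le> \<rho> / vnorm (g k 1)"
    and ritz_values: "\<And>k. 1 \<le> k \<Longrightarrow> eigs_with_mult m (transpose_mat (Q k) * A * Q k) (\<theta> k)"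
    and alpha_next: "\<And>k j. 1 \<le> k \<Longrightarrow> j \<in> {1..m} \<Longrightarrow> \<alpha> (k+1) j = 1 / \<theta> k j"
begin

lemma n_pos: "1 \<le> n"
  using g_carrier[of 1 1] g_nonzero[of 1] by (cases n) auto

lemma lam_extremes: "0 < lam 1" "lam 1 \<le> lam n"
  using lam_pos lam_sorted n_pos by auto

lemma g_first_pos: "1 \<le> k \<Longrightarrow> 0 < g k 1 \<bullet> g k 1"
  using scalar_prod_self_pos[OF g_carrier g_nonzero] by simp

definition gcoord :: "nat \<Rightarrow> nat \<Rightarrow> nat \<Rightarrow> real" where
  "gcoord k j i = coord (g k j) $ i"

lemma gcoord_step:
  assumes k: "1 \<le> k" and j: "j \<in> {1..m}" and i: "i < n"
  shows "gcoord k (j+1) i = (1 - \<alpha> k j * eigval i) * gcoord k j i"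
proof -
  have gk: "g k j \<in> carrier_vec n" using g_carrier[OF k] j by simp
  hence "coord (g k j - \<alpha> k j \<cdot>\<^sub>v (A *\<^sub>v g k j)) $ i = coord (g k j) $ i - \<alpha> k j * coord (A *\<^sub>v g k j) $ i"
    using A by (intro coord_diff_smult[OF gk _ i]) auto
  thus ?thesis unfolding gcoord_def g_step[OF k j] coord_mult_A[OF gk i] by (simp add: algebra_simps)
qed

lemma gcoord_in_cycle:
  assumes k: "1 \<le> k" and i: "i < n"
  shows "1 \<le> j \<Longrightarrow> j \<le> m+1 \<Longrightarrow> gcoord k j i = (\<Prod>l\<in>{1..<j}. 1 - \<alpha> k l * eigval i) * gcoord k 1 i"
proof (induct j rule: nat_induct_at_least)
  case (Suc j)
  thus ?case using gcoord_step[OF k _ i, of j] by (simp add: prod.atLeastLessThan_Suc)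
qed simp

lemma gcoord_next_cycle:
  assumes k: "1 \<le> k" and i: "i < n"
  shows "gcoord (k+1) 1 i = (\<Prod>l\<in>{1..m}. 1 - \<alpha> k l * eigval i) * gcoord k 1 i"
  using gcoord_in_cycle[OF k i, of "m+1"] g_cycle[OF k] atLeastLessThanSuc_atLeastAtMost
  by (simp add: gcoord_def)

lemma g_scalar_prod_self: "1 \<le> k \<Longrightarrow> j \<in> {1..m+1} \<Longrightarrow> g k j \<bullet> g k j = (\<Sum>i<n. (gcoord k j i)^2)"
  unfolding gcoord_def using scalar_prod_self_coord g_carrier by simp

lemma ritz_vector:
  assumes k: "1 \<le> k" and j: "j \<in> {1..m}"
  shows "\<exists>c \<in> carrier_vec m. let u = cols_mat n m (g k) *\<^sub>v c in
    u \<in> carrier_vec n \<and> 0 < u \<bullet> u \<and> \<theta> k j * (u \<bullet> u) = u \<bullet> (A *\<^sub>v u) \<and>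
    (c \<bullet> c) * (g k 1 \<bullet> g k 1) \<le> \<rho>^2 * (u \<bullet> u)"
proof -
  have Q: "Q k \<in> carrier_mat n m" and Rk: "R k \<in> carrier_mat m m"
    and GQR: "cols_mat n m (g k) = Q k * R k" and QtQ: "transpose_mat (Q k) * Q k = 1\<^sub>m m"
    using QR[OF k] by auto
  have T: "transpose_mat (Q k) * A * Q k \<in> carrier_mat m m" using Q A by auto
  have "poly (char_poly (transpose_mat (Q k) * A * Q k)) (\<theta> k j) = 0"
    using ritz_values[OF k] j unfolding eigs_with_mult_def by (auto simp: poly_prod)
  then obtain w where w: "w \<in> carrier_vec m" "w \<noteq> 0\<^sub>v m"
    and ww: "(Q k *\<^sub>v w) \<bullet> (Q k *\<^sub>v w) = w \<bullet> w"
    and th: "\<theta> k j * (w \<bullet> w) = (Q k *\<^sub>v w) \<bullet> (A *\<^sub>v (Q k *\<^sub>v w))"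
    using ritz_value_rayleigh_quotient[OF A Q QtQ] eigenvalue_root_char_poly[OF T] by blast
  obtain Ri where Ri: "Ri \<in> carrier_mat m m" "R k * Ri = 1\<^sub>m m"
    and Ri_norm: "spec_norm Ri \<le> \<rho> / vnorm (g k 1)" using R_inverse[OF k] by blast
  define c where "c = Ri *\<^sub>v w"
  have c: "c \<in> carrier_vec m" unfolding c_def using Ri w by auto
  have Gc: "cols_mat n m (g k) *\<^sub>v c = Q k *\<^sub>v w"
    unfolding GQR c_def using Q Rk Ri w
    by (simp add: assoc_mult_mat_vec[of _ n m _ m] assoc_mult_mat_vec[symmetric, of _ m m _ m])
  have gpos: "0 < vnorm (g k 1)" using vnorm_pos[OF g_carrier[OF k] g_nonzero[OF k]] by simp
  have "vnorm c \<le> spec_norm Ri * vnorm w" unfolding c_def by (rule vnorm_mult_mat_vec_le[OF Ri(1) w(1)])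
  also have "\<dots> \<le> \<rho> / vnorm (g k 1) * vnorm w" by (rule mult_right_mono[OF Ri_norm vnorm_nonneg])
  finally have "vnorm c * vnorm (g k 1) \<le> \<rho> * vnorm w" using gpos by (simp add: field_simps)
  hence "(vnorm c * vnorm (g k 1))^2 \<le> (\<rho> * vnorm w)^2"
    by (intro power_mono) (auto simp: vnorm_nonneg)
  hence "(c \<bullet> c) * (g k 1 \<bullet> g k 1) \<le> \<rho>^2 * (w \<bullet> w)"
    by (simp add: power_mult_distrib vnorm_square)
  moreover have "0 < w \<bullet> w" using scalar_prod_self_pos[OF w] .
  ultimately have "let u = cols_mat n m (g k) *\<^sub>v c in
    u \<in> carrier_vec n \<and> 0 < u \<bullet> u \<and> \<theta> k j * (u \<bullet> u) = u \<bullet> (A *\<^sub>v u) \<and>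
    (c \<bullet> c) * (g k 1 \<bullet> g k 1) \<le> \<rho>^2 * (u \<bullet> u)"
    unfolding Let_def Gc using Q w ww th by auto
  thus ?thesis using c by blast
qed

lemma ritz_value_bounds:
  assumes k: "1 \<le> k" and j: "j \<in> {1..m}"
  shows "lam 1 \<le> \<theta> k j" "\<theta> k j \<le> lam n"
proof -
  obtain u where u: "u \<in> carrier_vec n" "0 < u \<bullet> u" and th: "\<theta> k j * (u \<bullet> u) = u \<bullet> (A *\<^sub>v u)"
    using ritz_vector[OF k j] by (auto simp: Let_def)
  show "lam 1 \<le> \<theta> k j" using rayleigh_bounds(1)[OF u(1)] th u(2) by (metis mult_right_le_imp_le)
  show "\<theta> k j \<le> lam n" using rayleigh_bounds(2)[OF u(1)] th u(2) by (metis mult_right_le_imp_le)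
qed

definition growth :: real where
  "growth = 1 + lam n / lam 1 + (\<Sum>j\<in>{1..m}. \<alpha> 1 j) * lam n"

lemma growth_ge_1: "1 \<le> growth"
proof -
  have "0 \<le> (\<Sum>j\<in>{1..m}. \<alpha> 1 j)" using alpha_first_pos by (intro sum_nonneg) (auto intro: less_imp_le)
  thus ?thesis unfolding growth_def using lam_extremes by simp
qed

lemma step_factor_bound:
  assumes k: "1 \<le> k" and j: "j \<in> {1..m}" and i: "i < n"
  shows "\<bar>1 - \<alpha> k j * eigval i\<bar> \<le> growth"
proof -
  have ev: "0 < eigval i" "eigval i \<le> lam n" using eigval_bounds[OF i] lam_extremes by auto
  have "0 < \<alpha> k j * eigval i \<and> \<alpha> k j * eigval i \<le> lam n / lam 1 + (\<Sum>j\<in>{1..m}. \<alpha> 1 j) * lam n"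
  proof (cases "k = 1")
    case True
    have "\<alpha> 1 j \<le> (\<Sum>j\<in>{1..m}. \<alpha> 1 j)"
      using j alpha_first_pos by (intro member_le_sum) (auto intro: less_imp_le)
    hence "\<alpha> 1 j * eigval i \<le> (\<Sum>j\<in>{1..m}. \<alpha> 1 j) * lam n"
      using ev alpha_first_pos[OF j] by (intro mult_mono) auto
    moreover have "0 \<le> lam n / lam 1" using lam_extremes by auto
    ultimately show ?thesis using True ev alpha_first_pos[OF j] by simp
  next
    case False
    hence k': "1 \<le> k - 1" "k = (k - 1) + 1" using k by auto
    have th: "lam 1 \<le> \<theta> (k-1) j" using ritz_value_bounds[OF k'(1) j] by simp
    have "\<alpha> k j * eigval i = eigval i / \<theta> (k-1) j" using alpha_next[OF k'(1) j] k'(2) by simp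
    moreover have "eigval i / \<theta> (k-1) j \<le> lam n / lam 1"
      using ev th lam_extremes by (intro frac_le) auto
    moreover have "0 \<le> (\<Sum>j\<in>{1..m}. \<alpha> 1 j) * lam n"
      using alpha_first_pos lam_extremes by (intro mult_nonneg_nonneg sum_nonneg) (auto intro: less_imp_le)
    ultimately show ?thesis using ev th lam_extremes by auto
  qed
  thus ?thesis unfolding growth_def by (simp add: abs_if)
qed

lemma gcoord_growth:
  assumes k: "1 \<le> k" and j: "j \<in> {1..m+1}" and i: "i < n"
  shows "\<bar>gcoord k j i\<bar> \<le> growth^m * \<bar>gcoord k 1 i\<bar>"
proof -
  have "\<bar>gcoord k j i\<bar> = (\<Prod>l\<in>{1..<j}. \<bar>1 - \<alpha> k l * eigval i\<bar>) * \<bar>gcoord k 1 i\<bar>"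
    using gcoord_in_cycle[OF k i, of j] j by (simp add: abs_mult abs_prod)
  also have "(\<Prod>l\<in>{1..<j}. \<bar>1 - \<alpha> k l * eigval i\<bar>) \<le> growth ^ (j - 1)"
    using prod_mono[of "{1..<j}" "\<lambda>l. \<bar>1 - \<alpha> k l * eigval i\<bar>" "\<lambda>_. growth"]
      step_factor_bound[OF k _ i] j by simp
  also have "growth ^ (j - 1) \<le> growth ^ m" using j growth_ge_1 by (intro power_increasing) auto
  finally show ?thesis by (simp add: mult_right_mono)
qed

lemma coord_span:
  assumes k: "1 \<le> k" and c: "c \<in> carrier_vec m" and i: "i < n"
  shows "coord (cols_mat n m (g k) *\<^sub>v c) $ i = (\<Sum>l<m. c $ l * gcoord k (l+1) i)"
proof -
  define G where "G = cols_mat n m (g k)"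
  have G: "G \<in> carrier_mat n m" unfolding G_def cols_mat_def by auto
  have colG: "col G l = g k (l+1)" if l: "l < m" for l
    unfolding G_def cols_mat_def by (rule eq_vecI) (use l g_carrier[OF k, of "l+1"] in auto)
  have "coord (G *\<^sub>v c) = (transpose_mat V * G) *\<^sub>v c"
    unfolding coord_def by (rule assoc_mult_mat_vec[symmetric]) (use V G c in auto)
  also have "\<dots> $ i = (\<Sum>l<m. (transpose_mat V * G) $$ (i,l) * c $ l)"
    using V G c i by (simp add: mult_mat_vec_def scalar_prod_def lessThan_atLeast0)
  also have "\<dots> = (\<Sum>l<m. c $ l * gcoord k (l+1) i)"
    using V G i colG by (intro sum.cong) (auto simp: gcoord_def coord_def)
  finally show ?thesis unfolding G_def .
qed

lemma span_spectral_mass_below: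
  assumes k: "1 \<le> k" and c: "c \<in> carrier_vec m"
  shows "spectral_mass_below (cols_mat n m (g k) *\<^sub>v c) \<mu>
    \<le> real m^2 * (c \<bullet> c) * growth^(2*m) * spectral_mass_below (g k 1) \<mu>"
proof -
  have coord_bound: "(coord (cols_mat n m (g k) *\<^sub>v c) $ i)^2 \<le> real m^2 * (c \<bullet> c) * growth^(2*m) * (gcoord k 1 i)^2"
    if i: "i < n" for i
  proof -
    have "\<bar>coord (cols_mat n m (g k) *\<^sub>v c) $ i\<bar> \<le> (\<Sum>l<m. \<bar>c $ l\<bar> * \<bar>gcoord k (l+1) i\<bar>)"
      unfolding coord_span[OF k c i] using sum_abs[of "\<lambda>l. c $ l * gcoord k (l+1) i" "{..<m}"]
      by (simp add: abs_mult)
    also have "\<dots> \<le> (\<Sum>l<m. vnorm c * (growth^m * \<bar>gcoord k 1 i\<bar>))"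
      using abs_component_le_vnorm[OF c] gcoord_growth[OF k _ i] vnorm_nonneg
      by (intro sum_mono mult_mono) auto
    also have "\<dots> = real m * vnorm c * growth^m * \<bar>gcoord k 1 i\<bar>" by simp
    finally have "(coord (cols_mat n m (g k) *\<^sub>v c) $ i)^2 \<le> (real m * vnorm c * growth^m * \<bar>gcoord k 1 i\<bar>)^2"
      using power_mono by (metis abs_ge_zero power2_abs)
    thus ?thesis by (simp add: power_mult_distrib vnorm_square power_mult[symmetric] mult.commute)
  qed
  show ?thesis
    unfolding spectral_mass_below_def sum_distrib_left
    using coord_bound by (intro sum_mono) (simp add: gcoord_def)
qed

definition low_mass_const :: real where
  "low_mass_const = real m^2 * growth^(2*m) * \<rho>^2"

lemma low_mass_const_nonneg: "0 \<le> low_mass_const"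
  unfolding low_mass_const_def using growth_ge_1 by simp

text \<open>The Ritz vector \<open>u = G\<^sub>k c\<close> has at most a quarter of its mass below \<open>\<mu>\<close>,
  so its Rayleigh quotient is at least \<open>3\<mu>/4\<close>.\<close>

lemma ritz_value_lower_bound:
  assumes k: "1 \<le> k" and \<mu>: "0 < \<mu>" and j: "j \<in> {1..m}"
    and small: "4 * low_mass_const * spectral_mass_below (g k 1) \<mu> \<le> g k 1 \<bullet> g k 1"
  shows "3/4 * \<mu> \<le> \<theta> k j"
proof -
  obtain c where c: "c \<in> carrier_vec m" and ritz: "let u = cols_mat n m (g k) *\<^sub>v c in
    u \<in> carrier_vec n \<and> 0 < u \<bullet> u \<and> \<theta> k j * (u \<bullet> u) = u \<bullet> (A *\<^sub>v u) \<and>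
    (c \<bullet> c) * (g k 1 \<bullet> g k 1) \<le> \<rho>^2 * (u \<bullet> u)"
    using ritz_vector[OF k j] by blast
  define u where "u = cols_mat n m (g k) *\<^sub>v c"
  have u: "u \<in> carrier_vec n" "0 < u \<bullet> u" and th: "\<theta> k j * (u \<bullet> u) = u \<bullet> (A *\<^sub>v u)"
    and cg: "(c \<bullet> c) * (g k 1 \<bullet> g k 1) \<le> \<rho>^2 * (u \<bullet> u)"
    using ritz unfolding u_def Let_def by auto
  define S where "S = spectral_mass_below (g k 1) \<mu>"
  have S: "0 \<le> S" unfolding S_def by (rule spectral_mass_below_nonneg)
  have "spectral_mass_below u \<mu> * (g k 1 \<bullet> g k 1)
    \<le> real m^2 * growth^(2*m) * S * ((c \<bullet> c) * (g k 1 \<bullet> g k 1))"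
    using mult_right_mono[OF span_spectral_mass_below[OF k c] less_imp_le[OF g_first_pos[OF k]]]
    unfolding u_def S_def by (simp add: mult_ac)
  also have "\<dots> \<le> low_mass_const * S * (u \<bullet> u)"
    using mult_left_mono[OF cg, of "real m^2 * growth^(2*m) * S"] S growth_ge_1
    by (simp add: low_mass_const_def mult_ac)
  also have "\<dots> \<le> (g k 1 \<bullet> g k 1) / 4 * (u \<bullet> u)"
    using small u(2) unfolding S_def by (intro mult_right_mono) auto
  finally have "spectral_mass_below u \<mu> \<le> (u \<bullet> u) / 4"
    using g_first_pos[OF k] by (simp add: mult.commute mult_le_cancel_left_pos)
  hence "\<mu> * (u \<bullet> u) - \<mu> * ((u \<bullet> u) / 4) \<le> u \<bullet> (A *\<^sub>v u)"
    using quadratic_form_ge_spectral_mass[OF u(1), of \<mu>] spectral_mass_below_nonneg[of u \<mu>]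
      lam_extremes \<mu>
    by (smt (verit) mult_left_mono mult_right_mono)
  hence "3/4 * \<mu> * (u \<bullet> u) \<le> \<theta> k j * (u \<bullet> u)" using th by simp
  thus ?thesis using u(2) by (rule mult_right_le_imp_le)
qed

abbreviation rate :: real where
  "rate \<equiv> lmsd_rate m n lam"

lemma rate_bounds: "0 < rate" "rate < 1"
  using lmsd_rate_bounds[OF m_pos] lam_pos lam_sorted by auto

text \<open>Once every Ritz value exceeds \<open>3/4\<close> of \<open>eigval i\<close>, each factor \<open>1 - eigval i / \<theta>\<close>
  lies in \<open>[-1/3, 1 - lam 1 / lam n]\<close>.\<close>

lemma gcoord_contraction:
  assumes k: "1 \<le> k" and i: "i < n"
    and small: "4 * low_mass_const * spectral_mass_below (g k 1) (eigval i) \<le> g k 1 \<bullet> g k 1"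
  shows "\<bar>gcoord (k+2) 1 i\<bar> \<le> rate * \<bar>gcoord (k+1) 1 i\<bar>"
proof -
  have ev: "lam 1 \<le> eigval i" "0 < eigval i" using eigval_bounds[OF i] lam_extremes by auto
  have factor: "\<bar>1 - \<alpha> (k+1) l * eigval i\<bar> \<le> max (1/3) (1 - lam 1 / lam n)" if l: "l \<in> {1..m}" for l
  proof -
    have lower: "3/4 * eigval i \<le> \<theta> k l" by (rule ritz_value_lower_bound[OF k ev(2) l small])
    have upper: "\<theta> k l \<le> lam n" using ritz_value_bounds[OF k l] by simp
    have pos: "0 < \<theta> k l" using lower ev by simp
    define r where "r = eigval i / \<theta> k l"
    define t where "t = lam 1 / lam n"
    have "r \<le> 4/3" using lower pos by (simp add: r_def divide_le_eq)
    moreover have "t \<le> r"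
      unfolding r_def t_def using ev upper pos lam_extremes by (intro frac_le) auto
    ultimately have "\<bar>1 - r\<bar> \<le> max (1/3) (1 - t)" by (auto simp: abs_if max_def)
    moreover have "\<alpha> (k+1) l * eigval i = r" using alpha_next[OF k l] by (simp add: r_def)
    ultimately show ?thesis by (simp add: t_def)
  qed
  have "\<bar>gcoord (k+2) 1 i\<bar> = (\<Prod>l\<in>{1..m}. \<bar>1 - \<alpha> (k+1) l * eigval i\<bar>) * \<bar>gcoord (k+1) 1 i\<bar>"
    using gcoord_next_cycle[of "k+1" i] i by (simp add: abs_mult abs_prod)
  also have "(\<Prod>l\<in>{1..m}. \<bar>1 - \<alpha> (k+1) l * eigval i\<bar>) \<le> rate"
    using prod_mono[of "{1..m}" "\<lambda>l. \<bar>1 - \<alpha> (k+1) l * eigval i\<bar>" "\<lambda>_. max (1/3) (1 - lam 1 / lam n)"]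
      factor n_pos by (simp add: lmsd_rate_def)
  finally show ?thesis by (simp add: mult_right_mono)
qed

lemma gcoord_two_cycles:
  assumes k: "1 \<le> k" and i: "i < n"
  shows "\<bar>gcoord (k+2) 1 i\<bar> \<le> growth^(2*m) * \<bar>gcoord k 1 i\<bar>"
proof -
  have cycle: "\<bar>gcoord (k'+1) 1 i\<bar> \<le> growth^m * \<bar>gcoord k' 1 i\<bar>" if "1 \<le> k'" for k'
    using gcoord_growth[OF that _ i, of "m+1"] g_cycle[OF that] by (simp add: gcoord_def)
  have "\<bar>gcoord (k+2) 1 i\<bar> \<le> growth^m * \<bar>gcoord (k+1) 1 i\<bar>" using cycle[of "k+1"] k by simp
  also have "\<dots> \<le> growth^m * (growth^m * \<bar>gcoord k 1 i\<bar>)"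
    using mult_left_mono[OF cycle[OF k], of "growth^m"] growth_ge_1 by simp
  finally have "\<bar>gcoord (k+2) 1 i\<bar> \<le> growth^m * (growth^m * \<bar>gcoord k 1 i\<bar>)" .
  moreover have "growth^(2*m) = growth^m * growth^m" by (simp add: mult_2 power_add)
  ultimately show ?thesis by (simp add: mult.assoc)
qed

text \<open>Either \<open>g\<^sub>k\<^sub>,\<^sub>1\<close> has little mass below \<open>eigval i\<close> and cycle \<open>k + 1\<close> contracts the
  \<open>i\<close>-th coordinate, or that mass, hence the \<open>i\<close>-th coordinate itself, is \<open>O(rate\<^sup>k)\<close>.\<close>

lemma eigencomponent_decay_step:
  assumes i: "i < n" and C: "0 \<le> C"
    and below: "\<And>k i'. 1 \<le> k \<Longrightarrow> i' < n \<Longrightarrow> eigval i' < eigval i \<Longrightarrow> \<bar>gcoord k 1 i'\<bar> \<le> C * rate^k"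
  shows "\<exists>C'. \<forall>k\<ge>1. \<bar>gcoord k 1 i\<bar> \<le> C' * rate^k"
proof -
  define B where "B = sqrt (4 * low_mass_const * real n) * C"
  have B: "0 \<le> B" unfolding B_def using C low_mass_const_nonneg by simp
  have "\<bar>gcoord (k+2) 1 i\<bar> \<le> max (rate * \<bar>gcoord (k+1) 1 i\<bar>) (growth^(2*m) * B * rate^k)"
    if k: "1 \<le> k" for k
  proof (cases "4 * low_mass_const * spectral_mass_below (g k 1) (eigval i) \<le> g k 1 \<bullet> g k 1")
    case True
    thus ?thesis using gcoord_contraction[OF k i] by simp
  next
    case False
    have "(gcoord k 1 i)^2 \<le> (\<Sum>i<n. (gcoord k 1 i)^2)" using i by (intro member_le_sum) auto
    also have "\<dots> = g k 1 \<bullet> g k 1" using g_scalar_prod_self[OF k, of 1] by simp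
    also have "\<dots> \<le> 4 * low_mass_const * spectral_mass_below (g k 1) (eigval i)" using False by simp
    also have "\<dots> \<le> 4 * low_mass_const * (real n * (C * rate^k)^2)"
      using below[OF k] low_mass_const_nonneg
      by (intro mult_left_mono spectral_mass_below_le) (auto simp: gcoord_def)
    also have "\<dots> = (B * rate^k)^2"
      unfolding B_def using low_mass_const_nonneg by (simp add: power_mult_distrib)
    finally have "\<bar>gcoord k 1 i\<bar>^2 \<le> (B * rate^k)^2" by simp
    hence "\<bar>gcoord k 1 i\<bar> \<le> B * rate^k"
      by (rule power2_le_imp_le) (use B rate_bounds in simp)
    hence "growth^(2*m) * \<bar>gcoord k 1 i\<bar> \<le> growth^(2*m) * (B * rate^k)"
      using growth_ge_1 by (intro mult_left_mono) simp_all
    hence "\<bar>gcoord (k+2) 1 i\<bar> \<le> growth^(2*m) * (B * rate^k)"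
      by (rule order.trans[OF gcoord_two_cycles[OF k i]])
    thus ?thesis unfolding mult.assoc by (rule max.coboundedI2)
  qed
  thus ?thesis by (rule geometric_bound_of_recurrence[OF rate_bounds(1), where a = "\<lambda>k. \<bar>gcoord k 1 i\<bar>"])
qed

lemma eigencomponent_decay: "i < n \<Longrightarrow> \<exists>C. \<forall>k\<ge>1. \<bar>gcoord k 1 i\<bar> \<le> C * rate^k"
proof (induct "card {i'. i' < n \<and> eigval i' < eigval i}" arbitrary: i rule: less_induct)
  case less
  let ?below = "{i'. i' < n \<and> eigval i' < eigval i}"
  have "card {i''. i'' < n \<and> eigval i'' < eigval i'} < card ?below" if "i' \<in> ?below" for i'
    using that less.prems by (intro psubset_card_mono) auto
  hence "\<exists>C. \<forall>i'\<in>?below. \<forall>k\<ge>1. \<bar>gcoord k 1 i'\<bar> \<le> C * rate^k"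
    using less.hyps rate_bounds by (intro finite_uniform_geometric_bound) auto
  then obtain C where C: "\<forall>i'\<in>?below. \<forall>k\<ge>1. \<bar>gcoord k 1 i'\<bar> \<le> C * rate^k" by blast
  have "\<bar>gcoord k 1 i'\<bar> \<le> max C 0 * rate^k" if "1 \<le> k" "i' < n" "eigval i' < eigval i" for k i'
  proof -
    have "C * rate^k \<le> max C 0 * rate^k" using rate_bounds by (intro mult_right_mono) auto
    moreover have "\<bar>gcoord k 1 i'\<bar> \<le> C * rate^k" using C that by blast
    ultimately show ?thesis by linarith
  qed
  thus ?case by (intro eigencomponent_decay_step[OF less.prems, of "max C 0"]) auto
qed

theorem gradient_r_linear: "\<exists>c1>0. \<forall>k\<ge>1. vnorm (g k 1) \<le> c1 * rate^k * vnorm (g 1 1)"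
proof -
  obtain C where C: "\<forall>i\<in>{..<n}. \<forall>k\<ge>1. \<bar>gcoord k 1 i\<bar> \<le> C * rate^k"
    using finite_uniform_geometric_bound[of "{..<n}" rate "\<lambda>i k. \<bar>gcoord k 1 i\<bar>"]
      eigencomponent_decay rate_bounds by (meson finite_lessThan lessThan_iff less_imp_le)
  define C' where "C' = max C 0"
  have C': "\<bar>gcoord k 1 i\<bar> \<le> C' * rate^k" if "1 \<le> k" "i < n" for k i
  proof -
    have "C * rate^k \<le> C' * rate^k" unfolding C'_def using rate_bounds by (intro mult_right_mono) auto
    moreover have "\<bar>gcoord k 1 i\<bar> \<le> C * rate^k" using C that by blast
    ultimately show ?thesis by linarith
  qed
  have g1: "0 < vnorm (g 1 1)" using vnorm_pos[OF g_carrier g_nonzero] by simp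
  define c1 where "c1 = (sqrt (real n) * C' + 1) / vnorm (g 1 1)"
  have "vnorm (g k 1) \<le> c1 * rate^k * vnorm (g 1 1)" if k: "1 \<le> k" for k
  proof -
    have "vnorm (g k 1) ^ 2 = (\<Sum>i<n. (gcoord k 1 i)^2)"
      using vnorm_square g_scalar_prod_self[OF k, of 1] by simp
    also have "\<dots> \<le> (\<Sum>i<n. (C' * rate^k)^2)"
      using power_mono[OF C'[OF k] abs_ge_zero, of _ 2] by (intro sum_mono) simp
    also have "\<dots> = (sqrt (real n) * C' * rate^k)^2" by (simp add: power_mult_distrib)
    finally have "vnorm (g k 1) \<le> sqrt (real n) * C' * rate^k"
      by (rule power2_le_imp_le) (use rate_bounds in \<open>simp add: C'_def\<close>)
    also have "\<dots> \<le> c1 * rate^k * vnorm (g 1 1)"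
      using g1 rate_bounds by (simp add: c1_def)
    finally show ?thesis .
  qed
  moreover have "0 < c1" unfolding c1_def C'_def using g1 by (simp add: add_nonneg_pos)
  ultimately show ?thesis by blast
qed

end

lemma eigs_with_mult_char_poly:
  assumes "eigs_with_mult d M lam"
  shows "char_poly M = (\<Prod>e\<leftarrow>map lam [1..<d+1]. [:-e,1:])"
proof -
  have "char_poly M = (\<Prod>i\<in>{1..d}. [:-lam i, 1:])" using assms unfolding eigs_with_mult_def by simp
  also have "{1..d} = set [1..<d+1]" by auto
  also have "(\<Prod>i\<in>set [1..<d+1]. [:-lam i, 1:]) = (\<Prod>i\<leftarrow>[1..<d+1]. [:-lam i, 1:])"
    by (subst prod.distinct_set_conv_list) auto
  finally show ?thesis by (simp add: o_def)
qed

lemma gradient_after_step: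
  fixes A :: "real mat"
  assumes "A \<in> carrier_mat n n" "b \<in> carrier_vec n" "x \<in> carrier_vec n"
  shows "A *\<^sub>v (x - a \<cdot>\<^sub>v (A *\<^sub>v x - b)) - b = (A *\<^sub>v x - b) - a \<cdot>\<^sub>v (A *\<^sub>v (A *\<^sub>v x - b))"
  using assms by (intro eq_vecI)
    (auto simp: mult_minus_distrib_mat_vec mult_mat_vec scalar_prod_minus_distrib)

lemma lmsd_iterates_carrier:
  fixes A :: "real mat" and x :: "nat \<Rightarrow> nat \<Rightarrow> real vec"
  assumes A: "A \<in> carrier_mat n n" and b: "b \<in> carrier_vec n" and x11: "x 1 1 \<in> carrier_vec n"
    and g: "\<forall>k\<ge>1. \<forall>j\<in>{1..m+1}. g k j = A *\<^sub>v x k j - b"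
    and step: "\<forall>k\<ge>1. \<forall>j\<in>{1..m}. x k (j + 1) = x k j - \<alpha> k j \<cdot>\<^sub>v g k j"
    and cycle: "\<forall>k\<ge>1. x (k + 1) 1 = x k (m + 1)"
  shows "1 \<le> k \<Longrightarrow> j \<in> {1..m+1} \<Longrightarrow> x k j \<in> carrier_vec n"
proof -
  have in_cycle: "x k j \<in> carrier_vec n" if "1 \<le> k" "x k 1 \<in> carrier_vec n" "1 \<le> j" "j \<le> m+1" for k j
    using that(3,4)
  proof (induct j rule: nat_induct_at_least)
    case (Suc j)
    thus ?case using that(1) step g A b by auto
  qed (use that(2) in simp)
  have "x k 1 \<in> carrier_vec n" if "1 \<le> k" for k
    using that
  proof (induct k rule: nat_induct_at_least)
    case (Suc k)
    thus ?case using in_cycle[of k "m+1"] cycle by simp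
  qed (use x11 in simp)
  thus "1 \<le> k \<Longrightarrow> j \<in> {1..m+1} \<Longrightarrow> x k j \<in> carrier_vec n" using in_cycle by simp
qed

theorem lmsd_gradients_r_linear:
  fixes A :: "real mat" and b :: "real vec" and x g :: "nat \<Rightarrow> nat \<Rightarrow> real vec"
    and \<alpha> \<theta> :: "nat \<Rightarrow> nat \<Rightarrow> real" and Q R :: "nat \<Rightarrow> real mat"
  assumes m_pos: "1 \<le> m"
    and lam_pos: "\<forall>i\<in>{1..n}. 0 < lam i"
    and lam_sorted: "\<forall>i j. 1 \<le> i \<longrightarrow> i \<le> j \<longrightarrow> j \<le> n \<longrightarrow> lam i \<le> lam j"
    and A: "A \<in> carrier_mat n n" and sym: "transpose_mat A = A" and eigs: "eigs_with_mult n A lam"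
    and b: "b \<in> carrier_vec n" and x11: "x 1 1 \<in> carrier_vec n"
    and alpha_first: "\<forall>j\<in>{1..m}. 0 < \<alpha> 1 j"
    and g: "\<forall>k\<ge>1. \<forall>j\<in>{1..m+1}. g k j = A *\<^sub>v x k j - b"
    and step: "\<forall>k\<ge>1. \<forall>j\<in>{1..m}. x k (j + 1) = x k j - \<alpha> k j \<cdot>\<^sub>v g k j"
    and cycle: "\<forall>k\<ge>1. x (k + 1) 1 = x k (m + 1)"
    and QR: "\<forall>k\<ge>1. Q k \<in> carrier_mat n m \<and> R k \<in> carrier_mat m m \<and>
      cols_mat n m (g k) = Q k * R k \<and> transpose_mat (Q k) * Q k = 1\<^sub>m m \<and> upper_triangular (R k)"
    and ritz: "\<forall>k\<ge>1. eigs_with_mult m (transpose_mat (Q k) * A * Q k) (\<theta> k) \<and>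
      (\<forall>i j. 1 \<le> i \<longrightarrow> i \<le> j \<longrightarrow> j \<le> m \<longrightarrow> \<theta> k j \<le> \<theta> k i)"
    and alpha_next: "\<forall>k\<ge>1. \<forall>j\<in>{1..m}. \<alpha> (k + 1) j = 1 / \<theta> k j"
    and g_nonzero: "\<forall>k\<ge>1. \<forall>j\<in>{1..m}. g k j \<noteq> 0\<^sub>v n"
    and R_inverse: "\<forall>k\<ge>1. \<exists>Ri. Ri \<in> carrier_mat m m \<and> R k * Ri = 1\<^sub>m m \<and> Ri * R k = 1\<^sub>m m \<and>
      spec_norm Ri \<le> \<rho> / vnorm (g k 1)"
  shows "\<exists>c1>0. \<forall>k\<ge>1. vnorm (g k 1) \<le> c1 * lmsd_rate m n lam ^ k * vnorm (g 1 1)"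
proof -
  obtain V where V: "V \<in> carrier_mat n n" "transpose_mat V * V = 1\<^sub>m n" "diagonal_mat (transpose_mat V * A * V)"
    using real_symmetric_orthogonal_diagonalization[OF A sym eigs_with_mult_char_poly[OF eigs]] by blast
  have x: "x k j \<in> carrier_vec n" if "1 \<le> k" "j \<in> {1..m+1}" for k j
    using lmsd_iterates_carrier[OF A b x11 g step cycle] that .
  have g_step: "g k (j+1) = g k j - \<alpha> k j \<cdot>\<^sub>v (A *\<^sub>v g k j)" if "1 \<le> k" "j \<in> {1..m}" for k j
    using that g step gradient_after_step[OF A b x[OF that(1)], of j "\<alpha> k j"] by simp
  interpret lmsd n A V lam m \<rho> \<alpha> Q R \<theta> g
    using A V eigs lam_sorted m_pos lam_pos alpha_first g x b g_step cycle g_nonzero QR R_inverse ritz alpha_next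
    by unfold_locales (auto 0 3)
  show ?thesis by (rule gradient_r_linear)
qed

theorem mainTheorem8:
  fixes n m :: nat and \<rho> :: real and lam :: "nat \<Rightarrow> real"
  assumes m_pos: "m \<ge> 1"
    and rho: "\<rho> \<ge> 1"
    and lam_pos: "\<forall>i\<in>{1..n}. 0 < lam i"
    and lam_sorted: "\<forall>i j. 1 \<le> i \<longrightarrow> i \<le> j \<longrightarrow> j \<le> n \<longrightarrow> lam i \<le> lam j"
  shows "\<exists>c2. 0 < c2 \<and> c2 < 1 \<and>
    (\<forall>(A :: real mat) (b :: real vec) (x :: nat \<Rightarrow> nat \<Rightarrow> real vec) (\<alpha> :: nat \<Rightarrow> nat \<Rightarrow> real)
        (Q :: nat \<Rightarrow> real mat) (R :: nat \<Rightarrow> real mat) (\<theta> :: nat \<Rightarrow> nat \<Rightarrow> real)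
        (g :: nat \<Rightarrow> nat \<Rightarrow> real vec).
      A \<in> carrier_mat n n \<and> transpose_mat A = A \<and>
      (\<forall>v\<in>carrier_vec n. v \<noteq> 0\<^sub>v n \<longrightarrow> v \<bullet> (A *\<^sub>v v) > 0) \<and>
      eigs_with_mult n A lam \<and>
      b \<in> carrier_vec n \<and> x 1 1 \<in> carrier_vec n \<and>
      (\<forall>j\<in>{1..m}. 0 < \<alpha> 1 j) \<and>
      (\<forall>k\<ge>1. \<forall>j\<in>{1..m+1}. g k j = A *\<^sub>v x k j - b) \<and>
      (\<forall>k\<ge>1. \<forall>j\<in>{1..m}. x k (j + 1) = x k j - \<alpha> k j \<cdot>\<^sub>v g k j) \<and>
      (\<forall>k\<ge>1. x (k + 1) 1 = x k (m + 1)) \<and>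
      (\<forall>k\<ge>1. Q k \<in> carrier_mat n m \<and> R k \<in> carrier_mat m m \<and>
         cols_mat n m (g k) = Q k * R k \<and>
         transpose_mat (Q k) * Q k = 1\<^sub>m m \<and> upper_triangular (R k)) \<and>
      (\<forall>k\<ge>1. eigs_with_mult m (transpose_mat (Q k) * A * Q k) (\<theta> k) \<and>
         (\<forall>i j. 1 \<le> i \<longrightarrow> i \<le> j \<longrightarrow> j \<le> m \<longrightarrow> \<theta> k j \<le> \<theta> k i)) \<and>
      (\<forall>k\<ge>1. \<forall>j\<in>{1..m}. \<alpha> (k + 1) j = 1 / \<theta> k j) \<and>
      (\<forall>k\<ge>1. \<forall>j\<in>{1..m}. g k j \<noteq> 0\<^sub>v n) \<and>
      (\<forall>k\<ge>1. \<forall>c\<in>carrier_vec m. cols_mat n m (g k) *\<^sub>v c = 0\<^sub>v n \<longrightarrow> c = 0\<^sub>v m) \<and>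
      (\<forall>k\<ge>1. \<exists>Ri. Ri \<in> carrier_mat m m \<and> R k * Ri = 1\<^sub>m m \<and> Ri * R k = 1\<^sub>m m \<and>
         spec_norm Ri \<le> \<rho> / vnorm (g k 1))
      \<longrightarrow> (\<exists>c1 > 0. \<forall>k\<ge>1. vnorm (g k 1) \<le> c1 * c2 ^ k * vnorm (g 1 1)))"
proof (rule exI[of _ "lmsd_rate m n lam"], intro conjI allI impI, goal_cases)
  case 1 show ?case using lmsd_rate_bounds[OF m_pos lam_pos lam_sorted] by simp
next
  case 2 show ?case using lmsd_rate_bounds[OF m_pos lam_pos lam_sorted] by simp
next
  case (3 A b x \<alpha> Q R \<theta> g)
  then show ?case
    by - (elim conjE, rule lmsd_gradients_r_linear[OF m_pos lam_pos lam_sorted,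
        where A = A and b = b and x = x and \<alpha> = \<alpha> and Q = Q and R = R and \<theta> = \<theta> and \<rho> = \<rho>];
        assumption)
qed

end
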